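(* Let $G$ be a finite, connected, simple, bridgeless, triangle-free cubic graph, and let $\Lambda$ be a valid labeling of $\mathfrak{L}_2(G)$. Then the subgraph of $\mathfrak{L}_2(G)$ induced by the set of open edges $\{e : \lambda_e=1\}$ is a disjoint union of cycles.
   Context: For a simple graph $H$, $\mathcal{L}(H)$ denotes its line graph (vertices = edges of $H$, adjacent iff sharing an endpoint). Let $\mathcal{T}$ be the set of triangles of $\mathcal{L}(\mathcal{L}(G))$ of the form $\mathcal{L}(T)$ (the three edges of $T$) for $T$ a triangle of $\mathcal{L}(G)$. The reduced order two line graph $\mathfrak{L}_2(G)$ has the vertex set of $\mathcal{L}(\mathcal{L}(G))$ and the edges of $\mathcal{L}(\mathcal{L}(G))$ not lying in any triangle of $\mathcal{T}$. For each edge $e$ of $G$ (a vertex of $\mathcal{L}(G)$), the four edges of $\mathcal{L}(G)$ incident to $e$ are pairwise adjacent in $\mathcal{L}(\mathcal{L}(G))$; the reduced clique $\mathbb{X}_e$ is the subgraph of $\mathfrak{L}_2(G)$ on these four vertices with all edges of $\mathfrak{L}_2(G)$ between them (it is a 4-cycle). A labeling $\Lambda=(\lambda_f)$ assigns to each edge $f$ of $\mathfrak{L}_2(G)$ a label $\lambda_f\in\{0,1\}$ ($1$ = open, $0$ = closed); it is valid if for every reduced clique $\mathbb{X}$ and every vertex $v$ of $\mathbb{X}$ there are two edges $\langle v,w\rangle,\langle v,u\rangle$ of $\mathbb{X}$ with $\lambda_{\langle v,w\rangle}=1-\lambda_{\langle v,u\rangle}$. *)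

theory Defs
  imports Main
begin

type_synonym 'a ugraph = "'a set \<times> 'a set set"

definition verts :: "'a ugraph \<Rightarrow> 'a set" where "verts G = fst G"
definition edges :: "'a ugraph \<Rightarrow> 'a set set" where "edges G = snd G"

definition simple_graph :: "'a ugraph \<Rightarrow> bool" where
  "simple_graph G \<longleftrightarrow>
     (\<forall>e\<in>edges G. \<exists>u v. u \<noteq> v \<and> e = {u, v} \<and> u \<in> verts G \<and> v \<in> verts G)"

definition finite_graph :: "'a ugraph \<Rightarrow> bool" where
  "finite_graph G \<longleftrightarrow> finite (verts G)"

definition adj :: "'a ugraph \<Rightarrow> 'a \<Rightarrow> 'a \<Rightarrow> bool" where
  "adj G u v \<longleftrightarrow> {u, v} \<in> edges G"

definition connected_graph :: "'a ugraph \<Rightarrow> bool" where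
  "connected_graph G \<longleftrightarrow> verts G \<noteq> {} \<and>
     (\<forall>u\<in>verts G. \<forall>v\<in>verts G. (adj G)\<^sup>*\<^sup>* u v)"

definition is_bridge :: "'a ugraph \<Rightarrow> 'a set \<Rightarrow> bool" where
  "is_bridge G e \<longleftrightarrow> e \<in> edges G \<and>
     (\<exists>u v. e = {u, v} \<and> \<not> (adj (verts G, edges G - {e}))\<^sup>*\<^sup>* u v)"

definition bridgeless :: "'a ugraph \<Rightarrow> bool" where
  "bridgeless G \<longleftrightarrow> (\<forall>e. \<not> is_bridge G e)"

definition triangle_free :: "'a ugraph \<Rightarrow> bool" where
  "triangle_free G \<longleftrightarrow>
     \<not> (\<exists>x y z. adj G x y \<and> adj G y z \<and> adj G x z)"

definition degree :: "'a ugraph \<Rightarrow> 'a \<Rightarrow> nat" where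
  "degree G v = card {e \<in> edges G. v \<in> e}"

definition cubic :: "'a ugraph \<Rightarrow> bool" where
  "cubic G \<longleftrightarrow> (\<forall>v\<in>verts G. degree G v = 3)"

definition line_graph :: "'a ugraph \<Rightarrow> 'a set ugraph" where
  "line_graph H = (edges H, {{e, f} | e f. e \<in> edges H \<and> f \<in> edges H \<and> e \<noteq> f \<and> e \<inter> f \<noteq> {}})"

definition triangles :: "'a ugraph \<Rightarrow> 'a set set" where
  "triangles H = {{x, y, z} | x y z. x \<noteq> y \<and> y \<noteq> z \<and> x \<noteq> z \<and>
       adj H x y \<and> adj H y z \<and> adj H x z}"

text \<open>The set \<T>: for each triangle T of L(G), the triangle L(T) of L(L(G)) whose
  vertices are the three edges of T; we record it by its vertex set.\<close>
definition tri_edges :: "'a set \<Rightarrow> 'a set set" where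
  "tri_edges T = {{x, y} | x y. x \<in> T \<and> y \<in> T \<and> x \<noteq> y}"

definition calT :: "'a ugraph \<Rightarrow> 'a set set set set" where
  "calT G = tri_edges ` triangles (line_graph G)"

definition reduced_L2 :: "'a ugraph \<Rightarrow> 'a set set ugraph" where
  "reduced_L2 G = (verts (line_graph (line_graph G)),
     {f \<in> edges (line_graph (line_graph G)). \<not> (\<exists>T\<in>calT G. f \<subseteq> T)})"

definition reduced_clique :: "'a ugraph \<Rightarrow> 'a set \<Rightarrow> 'a set set ugraph" where
  "reduced_clique G e =
     (let W = {f \<in> edges (line_graph G). e \<in> f}
      in (W, {f \<in> edges (reduced_L2 G). f \<subseteq> W}))"

text \<open>Labelings: values in {0,1} on the edges of the reduced graph (1 = open, 0 = closed).\<close>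
definition labeling :: "'a ugraph \<Rightarrow> ('a set set set \<Rightarrow> nat) \<Rightarrow> bool" where
  "labeling G lam \<longleftrightarrow> (\<forall>f\<in>edges (reduced_L2 G). lam f \<in> {0, 1})"

definition valid_labeling :: "'a ugraph \<Rightarrow> ('a set set set \<Rightarrow> nat) \<Rightarrow> bool" where
  "valid_labeling G lam \<longleftrightarrow> labeling G lam \<and>
     (\<forall>e\<in>edges G. \<forall>v\<in>verts (reduced_clique G e).
        \<exists>w u. {v, w} \<in> edges (reduced_clique G e) \<and> {v, u} \<in> edges (reduced_clique G e)
              \<and> lam {v, w} = 1 - lam {v, u})"

definition edge_induced :: "'a set set \<Rightarrow> 'a ugraph" where
  "edge_induced F = (\<Union>F, F)"

definition cycle_edges :: "'a list \<Rightarrow> 'a set set" where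
  "cycle_edges xs = {{xs ! i, xs ! ((i + 1) mod length xs)} | i. i < length xs}"

definition is_cycle_list :: "'a list \<Rightarrow> bool" where
  "is_cycle_list xs \<longleftrightarrow> distinct xs \<and> length xs \<ge> 3"

definition disjoint_union_of_cycles :: "'a ugraph \<Rightarrow> bool" where
  "disjoint_union_of_cycles H \<longleftrightarrow>
     (\<exists>Cs. finite Cs \<and> (\<forall>c\<in>Cs. is_cycle_list c) \<and>
        (\<forall>c\<in>Cs. \<forall>d\<in>Cs. c \<noteq> d \<longrightarrow> set c \<inter> set d = {}) \<and>
        verts H = (\<Union>c\<in>Cs. set c) \<and> edges H = (\<Union>c\<in>Cs. cycle_edges c))"

end

theory Submission
  imports Defs
begin

(* A vertex {e, f} of L(L(G)) lies in exactly two reduced cliques, X_e and X_f.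
   Write e = {a, b} with a the common endpoint of e and f.  In X_e the vertex {e, f} is
   adjacent to {e, g} for the three other edges g at e.  The edge to {e, f'} with f' at a
   lies in the triangle of T coming from the triangle {e, f, f'} of L(G) and is removed,
   while the two edges to {e, h} with h at b survive because G is triangle-free.
   Validity at {e, f} in X_e therefore opens exactly one of these two, and likewise in
   X_f: every vertex met by an open edge has exactly two open edges.  A finite 2-regular
   graph is a disjoint union of cycles: a longest path closes up into a cycle, which can
   be removed. *)

definition two_regular :: "'b set set \<Rightarrow> bool" where
  "two_regular F \<longleftrightarrow> (\<forall>x\<in>F. \<exists>u v. u \<noteq> v \<and> x = {u, v}) \<and>
     (\<forall>v\<in>\<Union>F. \<exists>a b. a \<noteq> b \<and> a \<noteq> v \<and> b \<noteq> v \<and> {x\<in>F. v \<in> x} = {{v, a}, {v, b}})"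

lemma two_regular_edgeD:
  assumes "two_regular F" "x \<in> F" "v \<in> x"
  obtains w where "x = {v, w}" "w \<noteq> v"
  using assms unfolding two_regular_def by (metis doubleton_eq_iff insertE singletonD)

lemma two_regular_other_nbr:
  assumes "two_regular F" "{v, x} \<in> F"
  obtains y where "{v, y} \<in> F" "y \<noteq> x" "y \<noteq> v"
proof -
  have "v \<in> \<Union>F" using assms(2) by blast
  then obtain a b where ab: "a \<noteq> b" "a \<noteq> v" "b \<noteq> v" "{z\<in>F. v \<in> z} = {{v, a}, {v, b}}"
    using assms(1) unfolding two_regular_def by blast
  then have "{v, a} \<in> F" "{v, b} \<in> F" by blast+
  then show ?thesis using that ab by (cases "x = a") auto
qed

lemma two_regular_three_nbrs:
  assumes "two_regular F" "{v, x} \<in> F" "{v, y} \<in> F" "{v, z} \<in> F"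
    and "x \<noteq> v" "y \<noteq> v" "z \<noteq> v"
  shows "x = y \<or> y = z \<or> x = z"
proof -
  have "v \<in> \<Union>F" using assms(2) by blast
  then obtain a b where ab: "{w\<in>F. v \<in> w} = {{v, a}, {v, b}}"
    using assms(1) unfolding two_regular_def by blast
  have "{v, x} \<in> {w\<in>F. v \<in> w}" "{v, y} \<in> {w\<in>F. v \<in> w}" "{v, z} \<in> {w\<in>F. v \<in> w}"
    using assms(2-4) by simp_all
  then have "{v, x} \<in> {{v, a}, {v, b}}" "{v, y} \<in> {{v, a}, {v, b}}" "{v, z} \<in> {{v, a}, {v, b}}"
    unfolding ab .
  then have "x \<in> {a, b}" "y \<in> {a, b}" "z \<in> {a, b}"
    using assms(5-7) by (auto simp: doubleton_eq_iff)
  then show ?thesis by auto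
qed

lemma finite_Union_two_regular:
  assumes "finite F" "two_regular F"
  shows "finite (\<Union>F)"
  using assms unfolding two_regular_def by (metis finite.emptyI finite.insertI finite_Union)

definition path_in :: "'b set set \<Rightarrow> 'b list \<Rightarrow> bool" where
  "path_in F xs \<longleftrightarrow> distinct xs \<and> set xs \<subseteq> \<Union>F \<and> successively (\<lambda>u v. {u, v} \<in> F) xs"

lemma length_path_in_le:
  assumes "finite (\<Union>F)" "path_in F xs"
  shows "length xs \<le> card (\<Union>F)"
  using assms unfolding path_in_def by (metis card_mono distinct_card)

lemma path_in_snoc:
  assumes "path_in F xs" "xs \<noteq> []" "{last xs, y} \<in> F" "y \<notin> set xs"
  shows "path_in F (xs @ [y])"
  using assms unfolding path_in_def by (auto simp: successively_append_iff)

lemma cycle_edges_nth: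
  "i < length xs \<Longrightarrow> {xs ! i, xs ! ((i + 1) mod length xs)} \<in> cycle_edges xs"
  unfolding cycle_edges_def by blast

lemma Union_cycle_edges: "\<Union>(cycle_edges xs) = set xs"
proof
  show "\<Union>(cycle_edges xs) \<subseteq> set xs"
  proof
    fix v assume "v \<in> \<Union>(cycle_edges xs)"
    then obtain i where i: "i < length xs" "v \<in> {xs ! i, xs ! ((i + 1) mod length xs)}"
      unfolding cycle_edges_def by blast
    moreover have "(i + 1) mod length xs < length xs" using i(1) by (intro mod_less_divisor) auto
    ultimately show "v \<in> set xs" by auto
  qed
  show "set xs \<subseteq> \<Union>(cycle_edges xs)"
  proof
    fix v assume "v \<in> set xs"
    then obtain i where "i < length xs" "v = xs ! i" by (auto simp: in_set_conv_nth)
    then show "v \<in> \<Union>(cycle_edges xs)" using cycle_edges_nth[of i xs] by blast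
  qed
qed

lemma cycle_edges_subset:
  assumes "xs \<noteq> []" "successively (\<lambda>u v. {u, v} \<in> F) xs" "{last xs, hd xs} \<in> F"
  shows "cycle_edges xs \<subseteq> F"
proof
  fix x assume "x \<in> cycle_edges xs"
  then obtain i where i: "i < length xs" "x = {xs ! i, xs ! ((i + 1) mod length xs)}"
    unfolding cycle_edges_def by blast
  show "x \<in> F"
  proof (cases "Suc i = length xs")
    case True
    then have "i = length xs - 1" by simp
    then show ?thesis using True i assms(1,3) by (simp add: last_conv_nth hd_conv_nth)
  next
    case False
    then have "Suc i < length xs" using i(1) by simp
    then show ?thesis using successively_nth[OF assms(2)] i(2) by simp
  qed
qed

lemma longest_path_in:
  assumes "finite F" "two_regular F" "F \<noteq> {}"
  obtains xs where "path_in F xs" "length xs \<ge> 2"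
    "\<forall>ys. path_in F ys \<longrightarrow> length ys \<le> length xs"
proof -
  obtain x where "x \<in> F" using assms(3) by blast
  then have "\<exists>u v. u \<noteq> v \<and> x = {u, v}" using assms(2) unfolding two_regular_def by blast
  then obtain u v where "u \<noteq> v" "x = {u, v}" by blast
  then have uv: "path_in F [u, v]" using \<open>x \<in> F\<close> unfolding path_in_def by auto
  have bounded: "\<forall>ys. path_in F ys \<longrightarrow> length ys < Suc (card (\<Union>F))"
    using length_path_in_le[OF finite_Union_two_regular[OF assms(1,2)]] by (simp add: less_Suc_eq_le)
  obtain xs where xs: "path_in F xs" and longest: "\<forall>ys. path_in F ys \<longrightarrow> length ys \<le> length xs"
    using ex_has_greatest_nat[of "path_in F" "[u, v]" length, OF uv bounded] by (elim exE conjE)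
  moreover have "2 \<le> length xs" using longest uv by force
  ultimately show ?thesis using that by blast
qed

lemma longest_path_in_closes:
  assumes "two_regular F" "path_in F xs" "length xs \<ge> 2"
    and longest: "\<forall>ys. path_in F ys \<longrightarrow> length ys \<le> length xs"
  shows "{last xs, hd xs} \<in> F" "length xs \<ge> 3"
proof -
  define n where "n = length xs"
  have dist: "distinct xs" using assms(2) unfolding path_in_def by simp
  have step: "{xs ! i, xs ! Suc i} \<in> F" if "Suc i < n" for i
    using assms(2) that unfolding path_in_def n_def successively_conv_nth by blast
  have "Suc (n - 2) = n - 1" "Suc (n - 2) < n" using assms(3) n_def by auto
  then have "{xs ! (n - 1), xs ! (n - 2)} \<in> F"
    using step[of "n - 2"] by (simp add: insert_commute)
  then obtain y where y: "{xs ! (n - 1), y} \<in> F" "y \<noteq> xs ! (n - 2)" "y \<noteq> xs ! (n - 1)"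
    by (rule two_regular_other_nbr[OF assms(1)])
  have "xs \<noteq> []" using assms(3) by auto
  then have last: "last xs = xs ! (n - 1)" by (simp add: last_conv_nth n_def)
  have "y \<in> set xs"
  proof (rule ccontr)
    assume "y \<notin> set xs"
    then have "path_in F (xs @ [y])"
      using path_in_snoc[OF assms(2) \<open>xs \<noteq> []\<close>] y(1) last by simp
    then show False using longest by fastforce
  qed
  then obtain j where j: "j < n" "y = xs ! j" by (auto simp: in_set_conv_nth n_def)
  have "j \<noteq> n - 1" "j \<noteq> n - 2" using y(2,3) j by auto
  have "j = 0"
  proof (rule ccontr)
    assume "j \<noteq> 0"
    \<comment> \<open>then the inner vertex \<open>y\<close> would have three distinct neighbours\<close>
    have "{y, xs ! (j - 1)} \<in> F" "{y, xs ! (j + 1)} \<in> F" "{y, xs ! (n - 1)} \<in> F"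
      using step[of "j - 1"] step[of j] y(1) j \<open>j \<noteq> 0\<close> \<open>j \<noteq> n - 1\<close>
      by (simp_all add: insert_commute)
    note three = two_regular_three_nbrs[OF assms(1) this]
    have "xs ! (j - 1) \<noteq> xs ! (j + 1)" "xs ! (j + 1) \<noteq> xs ! (n - 1)"
      "xs ! (j - 1) \<noteq> xs ! (n - 1)" "xs ! (j - 1) \<noteq> y" "xs ! (j + 1) \<noteq> y"
      using dist j \<open>j \<noteq> 0\<close> \<open>j \<noteq> n - 1\<close> \<open>j \<noteq> n - 2\<close> unfolding n_def
      by (auto simp: nth_eq_iff_index_eq)
    then show False using three y(3) by blast
  qed
  show "{last xs, hd xs} \<in> F"
    using y(1) j \<open>j = 0\<close> last \<open>xs \<noteq> []\<close> by (simp add: hd_conv_nth)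
  show "length xs \<ge> 3" using \<open>j = 0\<close> \<open>j \<noteq> n - 2\<close> assms(3) n_def by linarith
qed

lemma two_regular_has_cycle:
  assumes "finite F" "two_regular F" "F \<noteq> {}"
  obtains xs where "is_cycle_list xs" "cycle_edges xs \<subseteq> F"
proof -
  obtain xs where path: "path_in F xs" and "length xs \<ge> 2"
    and "\<forall>ys. path_in F ys \<longrightarrow> length ys \<le> length xs"
    by (rule longest_path_in[OF assms])
  note closes = longest_path_in_closes[OF assms(2) this]
  have "cycle_edges xs \<subseteq> F"
  proof (rule cycle_edges_subset)
    show "xs \<noteq> []" using \<open>length xs \<ge> 2\<close> by auto
    show "successively (\<lambda>u v. {u, v} \<in> F) xs" using path unfolding path_in_def by simp
  qed (rule closes(1))
  moreover have "is_cycle_list xs"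
    using path closes(2) unfolding path_in_def is_cycle_list_def by simp
  ultimately show ?thesis using that by blast
qed

lemma cycle_edges_closed:
  assumes "two_regular F" "is_cycle_list xs" "cycle_edges xs \<subseteq> F"
    and "x \<in> F" "v \<in> x" "v \<in> set xs"
  shows "x \<in> cycle_edges xs"
proof -
  define n where "n = length xs"
  have "distinct xs" "n \<ge> 3" using assms(2) unfolding is_cycle_list_def n_def by simp_all
  obtain i where i: "i < n" "v = xs ! i" using assms(6) by (auto simp: in_set_conv_nth n_def)
  define s where "s = (if Suc i = n then 0 else Suc i)"
  define p where "p = (if i = 0 then n - 1 else i - 1)"
  have idx: "(i + 1) mod n = s" "(p + 1) mod n = i" "s < n" "p < n" "s \<noteq> p" "s \<noteq> i" "p \<noteq> i"
    using i \<open>n \<ge> 3\<close> unfolding s_def p_def by auto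
  have succ: "{v, xs ! s} \<in> cycle_edges xs"
    using cycle_edges_nth[of i xs] i idx(1) by (simp add: n_def)
  have pred: "{v, xs ! p} \<in> cycle_edges xs"
    using cycle_edges_nth[of p xs] i idx(2,4) by (simp add: n_def insert_commute)
  have "xs ! s \<noteq> xs ! p" "xs ! s \<noteq> v" "xs ! p \<noteq> v"
    using \<open>distinct xs\<close> i idx(3-7) unfolding n_def by (simp_all add: nth_eq_iff_index_eq)
  moreover obtain w where w: "x = {v, w}" "w \<noteq> v"
    using two_regular_edgeD[OF assms(1,4,5)] .
  ultimately have "w = xs ! s \<or> w = xs ! p"
    using two_regular_three_nbrs[OF assms(1), of v "xs ! s" "xs ! p" w] succ pred assms(3,4)
    by blast
  then show ?thesis using w(1) succ pred by blast
qed

lemma two_regular_Diff_cycle: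
  assumes "two_regular F" "is_cycle_list xs" "cycle_edges xs \<subseteq> F"
  shows "two_regular (F - cycle_edges xs)" and "\<Union>(F - cycle_edges xs) \<inter> set xs = {}"
proof -
  show disj: "\<Union>(F - cycle_edges xs) \<inter> set xs = {}"
    using cycle_edges_closed[OF assms] by blast
  have "{x \<in> F - cycle_edges xs. v \<in> x} = {x \<in> F. v \<in> x}" if "v \<in> \<Union>(F - cycle_edges xs)" for v
    using that disj Union_cycle_edges[of xs] by blast
  then show "two_regular (F - cycle_edges xs)"
    using assms(1) unfolding two_regular_def by auto
qed

lemma disjoint_union_of_cycles_empty: "disjoint_union_of_cycles (edge_induced {})"
  unfolding disjoint_union_of_cycles_def edge_induced_def verts_def edges_def
  by (rule exI[of _ "{}"]) simp

lemma disjoint_union_of_cycles_add_cycle: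
  assumes "disjoint_union_of_cycles (edge_induced F)" "is_cycle_list xs" "\<Union>F \<inter> set xs = {}"
  shows "disjoint_union_of_cycles (edge_induced (cycle_edges xs \<union> F))"
proof -
  obtain Cs where Cs: "finite Cs" "\<forall>c\<in>Cs. is_cycle_list c"
      "\<forall>c\<in>Cs. \<forall>d\<in>Cs. c \<noteq> d \<longrightarrow> set c \<inter> set d = {}"
      "\<Union>F = (\<Union>c\<in>Cs. set c)" "F = (\<Union>c\<in>Cs. cycle_edges c)"
    using assms(1) unfolding disjoint_union_of_cycles_def edge_induced_def verts_def edges_def
    by auto
  have "set c \<inter> set xs = {}" if "c \<in> Cs" for c
    using that Cs(4) assms(3) by blast
  moreover have "xs \<notin> Cs"
    using calculation assms(2) unfolding is_cycle_list_def by fastforce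
  ultimately show ?thesis
    unfolding disjoint_union_of_cycles_def edge_induced_def verts_def edges_def
    using Cs assms(2) Union_cycle_edges[of xs]
    by (intro exI[of _ "insert xs Cs"]) auto
qed

theorem two_regular_disjoint_union_of_cycles:
  assumes "finite F" "two_regular F"
  shows "disjoint_union_of_cycles (edge_induced F)"
  using assms
proof (induction "card F" arbitrary: F rule: less_induct)
  case less
  show ?case
  proof (cases "F = {}")
    case True
    then show ?thesis using disjoint_union_of_cycles_empty by simp
  next
    case False
    obtain xs where xs: "is_cycle_list xs" "cycle_edges xs \<subseteq> F"
      using two_regular_has_cycle[OF less.prems False] by blast
    define F' where "F' = F - cycle_edges xs"
    have "cycle_edges xs \<noteq> {}"
      using xs(1) Union_cycle_edges[of xs] unfolding is_cycle_list_def by force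
    then have "F' \<subset> F" using xs(2) unfolding F'_def by blast
    then have "card F' < card F" by (rule psubset_card_mono[OF less.prems(1)])
    moreover have "finite F'" "two_regular F'" "\<Union>F' \<inter> set xs = {}"
      using less.prems two_regular_Diff_cycle[OF less.prems(2) xs] unfolding F'_def by auto
    ultimately have "disjoint_union_of_cycles (edge_induced F')"
      using less.hyps by blast
    then have "disjoint_union_of_cycles (edge_induced (cycle_edges xs \<union> F'))"
      using disjoint_union_of_cycles_add_cycle xs(1) \<open>\<Union>F' \<inter> set xs = {}\<close> by blast
    then show ?thesis using xs(2) unfolding F'_def by (simp add: Un_absorb1)
  qed
qed

lemma simple_graph_other_endpoint:
  assumes "simple_graph G" "e \<in> edges G" "a \<in> e"
  obtains b where "e = {a, b}" "a \<noteq> b" "b \<in> verts G"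
  using assms unfolding simple_graph_def by (metis insert_commute insertE singletonD)

lemma simple_graph_edge_neq:
  assumes "simple_graph G" "{u, v} \<in> edges G"
  shows "u \<noteq> v"
proof
  assume "u = v"
  obtain x y where "x \<noteq> y" "{u, v} = {x, y}"
    using assms unfolding simple_graph_def by blast
  then have "x \<in> {u, v}" "y \<in> {u, v}" by auto
  then show False using \<open>u = v\<close> \<open>x \<noteq> y\<close> by auto
qed

lemma finite_edges_simple_graph:
  assumes "finite_graph G" "simple_graph G"
  shows "finite (edges G)"
proof -
  have "edges G \<subseteq> Pow (verts G)"
    using assms(2) unfolding simple_graph_def by auto
  moreover have "finite (Pow (verts G))"
    using assms(1) unfolding finite_graph_def by simp
  ultimately show ?thesis by (rule finite_subset)
qed

lemma edges_line_graph_subset_Pow: "edges (line_graph H) \<subseteq> Pow (edges H)"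
  unfolding line_graph_def edges_def by auto

lemma doubleton_in_edges_line_graph_iff:
  "{x, y} \<in> edges (line_graph H) \<longleftrightarrow> x \<in> edges H \<and> y \<in> edges H \<and> x \<noteq> y \<and> x \<inter> y \<noteq> {}"
  unfolding line_graph_def edges_def by (auto simp: doubleton_eq_iff Int_commute)

lemma edges_line_graph_cases:
  assumes "x \<in> edges (line_graph H)"
  obtains u v where "x = {u, v}" "u \<noteq> v"
  using assms unfolding line_graph_def edges_def by auto

lemma edges_line_graph_through:
  assumes "x \<in> edges (line_graph H)" "v \<in> x"
  obtains w where "x = {v, w}"
proof -
  obtain a b where x: "x = {a, b}" using edges_line_graph_cases[OF assms(1)] .
  then consider "v = a" | "v = b" using assms(2) by blast
  then show ?thesis
  proof cases
    case 1
    then show ?thesis using that[of b] x by simp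
  next
    case 2
    then show ?thesis using that[of a] x by (simp add: insert_commute)
  qed
qed

lemma finite_edges_line_graph:
  assumes "finite (edges H)"
  shows "finite (edges (line_graph H))"
  by (rule finite_subset[OF edges_line_graph_subset_Pow]) (simp add: assms)

lemma adj_sym: "adj H x y \<Longrightarrow> adj H y x"
  unfolding adj_def by (simp add: insert_commute)

lemma triangles_adj:
  assumes "X \<in> triangles H" "x \<in> X" "y \<in> X" "x \<noteq> y"
  shows "adj H x y"
proof -
  obtain a b c where abc: "X = {a, b, c}" "adj H a b" "adj H b c" "adj H a c"
    using assms(1) unfolding triangles_def by blast
  then have "adj H b a" "adj H c b" "adj H c a" by (simp_all add: adj_sym)
  then show ?thesis using assms(2-4) abc by auto
qed

lemma tri_edges_memD: "{x, y} \<in> tri_edges X \<Longrightarrow> x \<in> X \<and> y \<in> X"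
  unfolding tri_edges_def by (auto simp: doubleton_eq_iff)

lemma calT_through_triangle:
  assumes "{e, f} \<in> edges (line_graph G)" "{e, g} \<in> edges (line_graph G)"
    and "{f, g} \<in> edges (line_graph G)"
  shows "\<exists>T\<in>calT G. {{e, f}, {e, g}} \<subseteq> T"
proof -
  have "e \<noteq> f" "e \<noteq> g" "f \<noteq> g"
    using assms unfolding doubleton_in_edges_line_graph_iff by simp_all
  moreover have "adj (line_graph G) e f" "adj (line_graph G) f g" "adj (line_graph G) e g"
    using assms unfolding adj_def by simp_all
  ultimately have "{e, f, g} \<in> triangles (line_graph G)"
    unfolding triangles_def by blast
  then have "tri_edges {e, f, g} \<in> calT G" unfolding calT_def by (rule imageI)
  moreover have "{e, f} \<in> tri_edges {e, f, g}"
    using \<open>e \<noteq> f\<close> unfolding tri_edges_def by blast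
  moreover have "{e, g} \<in> tri_edges {e, f, g}"
    using \<open>e \<noteq> g\<close> unfolding tri_edges_def by blast
  ultimately show ?thesis by (intro bexI[of _ "tri_edges {e, f, g}"]) simp_all
qed

lemma calT_adj:
  assumes "T \<in> calT G" "{{e, f}, {e, g}} \<subseteq> T" "f \<noteq> g"
  shows "adj (line_graph G) f g"
proof -
  obtain X where X: "X \<in> triangles (line_graph G)" "T = tri_edges X"
    using assms(1) unfolding calT_def by blast
  have "{e, f} \<in> tri_edges X" "{e, g} \<in> tri_edges X" using assms(2) X(2) by auto
  then have "f \<in> X" "g \<in> X" using tri_edges_memD[of e f X] tri_edges_memD[of e g X] by simp_all
  then show ?thesis using triangles_adj[OF X(1)] assms(3) by blast
qed

lemma reduced_L2_edge_iff:
  assumes ef: "{e, f} \<in> edges (line_graph G)" and eg: "{e, g} \<in> edges (line_graph G)"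
    and "f \<noteq> g"
  shows "{{e, f}, {e, g}} \<in> edges (reduced_L2 G) \<longleftrightarrow> f \<inter> g = {}"
proof -
  have "e \<noteq> f" using ef unfolding doubleton_in_edges_line_graph_iff by simp
  then have "{e, f} \<noteq> {e, g}" using \<open>f \<noteq> g\<close> by (simp add: doubleton_eq_iff)
  then have "{{e, f}, {e, g}} \<in> edges (line_graph (line_graph G))"
    using ef eg unfolding doubleton_in_edges_line_graph_iff by blast
  then have "{{e, f}, {e, g}} \<in> edges (reduced_L2 G) \<longleftrightarrow> \<not> (\<exists>T\<in>calT G. {{e, f}, {e, g}} \<subseteq> T)"
    unfolding reduced_L2_def edges_def[of "(_, _)"] by simp
  also have "\<dots> \<longleftrightarrow> f \<inter> g = {}"
  proof
    assume "\<not> (\<exists>T\<in>calT G. {{e, f}, {e, g}} \<subseteq> T)"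
    then have "{f, g} \<notin> edges (line_graph G)" using calT_through_triangle[OF ef eg] by auto
    then show "f \<inter> g = {}"
      using ef eg \<open>f \<noteq> g\<close> unfolding doubleton_in_edges_line_graph_iff by simp
  next
    assume "f \<inter> g = {}"
    show "\<not> (\<exists>T\<in>calT G. {{e, f}, {e, g}} \<subseteq> T)"
    proof
      assume "\<exists>T\<in>calT G. {{e, f}, {e, g}} \<subseteq> T"
      then obtain T where "T \<in> calT G" "{{e, f}, {e, g}} \<subseteq> T" by blast
      then have "adj (line_graph G) f g" using \<open>f \<noteq> g\<close> by (rule calT_adj)
      then show False
        using \<open>f \<inter> g = {}\<close> unfolding adj_def doubleton_in_edges_line_graph_iff by simp
    qed
  qed
  finally show ?thesis .
qed

lemma edges_reduced_L2_subset: "edges (reduced_L2 G) \<subseteq> edges (line_graph (line_graph G))"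
  unfolding reduced_L2_def edges_def by auto

lemma reduced_clique_edge_iff:
  assumes "p \<in> edges (line_graph G)" "e \<in> p"
  shows "{p, q} \<in> edges (reduced_clique G e) \<longleftrightarrow> e \<in> q \<and> {p, q} \<in> edges (reduced_L2 G)"
proof -
  have clique: "edges (reduced_clique G e) =
      {x \<in> edges (reduced_L2 G). x \<subseteq> {f \<in> edges (line_graph G). e \<in> f}}"
    unfolding reduced_clique_def Let_def edges_def[of "(_, _)"] by simp
  have "q \<in> edges (line_graph G)" if "{p, q} \<in> edges (reduced_L2 G)"
    using that edges_reduced_L2_subset[of G] edges_line_graph_subset_Pow[of "line_graph G"]
    by blast
  then show ?thesis unfolding clique using assms by blast
qed

lemma reduced_L2_nbrD:
  assumes red: "{{e, f}, q} \<in> edges (reduced_L2 G)" and "e \<in> q" "e = {a, b}" "a \<in> f"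
  obtains h where "q = {e, h}" "h \<in> edges G" "h \<noteq> e" "b \<in> h"
proof -
  have "{{e, f}, q} \<in> edges (line_graph (line_graph G))"
    using red edges_reduced_L2_subset by blast
  then have ef: "{e, f} \<in> edges (line_graph G)" and q_LG: "q \<in> edges (line_graph G)"
    and "{e, f} \<noteq> q"
    unfolding doubleton_in_edges_line_graph_iff by simp_all
  obtain h where q: "q = {e, h}" using edges_line_graph_through[OF q_LG \<open>e \<in> q\<close>] .
  then have eh: "{e, h} \<in> edges (line_graph G)" using q_LG by simp
  then have h: "h \<in> edges G" "h \<noteq> e" "e \<inter> h \<noteq> {}"
    unfolding doubleton_in_edges_line_graph_iff by auto
  have "f \<noteq> h" using \<open>{e, f} \<noteq> q\<close> q by auto
  then have "f \<inter> h = {}" using reduced_L2_edge_iff[OF ef eh] red q by simp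
  then have "b \<in> h" using h(3) assms(3,4) by auto
  then show ?thesis using that q h(1,2) by simp
qed

lemma reduced_L2_nbrI:
  assumes sg: "simple_graph G" and tf: "triangle_free G"
    and e: "e = {a, b}" "e \<in> edges G" and f: "f = {a, c}" "f \<in> edges G" and "b \<noteq> c"
    and h: "h \<in> edges G" "h \<noteq> e" "b \<in> h"
  shows "{{e, f}, {e, h}} \<in> edges (reduced_L2 G)"
proof -
  have "a \<noteq> b" "a \<noteq> c" using simple_graph_edge_neq[OF sg] e f by auto
  then have "b \<notin> f" using f \<open>b \<noteq> c\<close> by auto
  obtain d where d: "h = {b, d}" "b \<noteq> d" "d \<in> verts G"
    using simple_graph_other_endpoint[OF sg h(1,3)] .
  have "d \<noteq> a" using d e h(2) by (auto simp: insert_commute)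
  have "d \<noteq> c"
  proof
    assume "d = c"
    then have "adj G a b" "adj G b c" "adj G a c" unfolding adj_def using e f h d by simp_all
    then show False using tf unfolding triangle_free_def by blast
  qed
  have "f \<inter> h = {}" using d f \<open>a \<noteq> b\<close> \<open>b \<noteq> c\<close> \<open>d \<noteq> a\<close> \<open>d \<noteq> c\<close> by auto
  moreover have "{e, f} \<in> edges (line_graph G)"
    unfolding doubleton_in_edges_line_graph_iff using e f \<open>b \<notin> f\<close> by auto
  moreover have "{e, h} \<in> edges (line_graph G)"
    unfolding doubleton_in_edges_line_graph_iff using e h by auto
  moreover have "f \<noteq> h" using \<open>b \<notin> f\<close> h(3) by auto
  ultimately show ?thesis using reduced_L2_edge_iff[of e f G h] by simp
qed

lemma reduced_L2_nbrs_eq: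
  assumes sg: "simple_graph G" and tf: "triangle_free G"
    and e: "e = {a, b}" "e \<in> edges G" and f: "f = {a, c}" "f \<in> edges G" and "b \<noteq> c"
  shows "{q. e \<in> q \<and> {{e, f}, q} \<in> edges (reduced_L2 G)} =
    (\<lambda>h. {e, h}) ` {h \<in> edges G. b \<in> h \<and> h \<noteq> e}"
proof (intro set_eqI iffI)
  fix q assume "q \<in> {q. e \<in> q \<and> {{e, f}, q} \<in> edges (reduced_L2 G)}"
  then have "{{e, f}, q} \<in> edges (reduced_L2 G)" "e \<in> q" by simp_all
  moreover have "a \<in> f" using f(1) by simp
  ultimately obtain h where "q = {e, h}" "h \<in> edges G" "h \<noteq> e" "b \<in> h"
    using reduced_L2_nbrD e(1) by metis
  then show "q \<in> (\<lambda>h. {e, h}) ` {h \<in> edges G. b \<in> h \<and> h \<noteq> e}" by blast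
next
  fix q assume "q \<in> (\<lambda>h. {e, h}) ` {h \<in> edges G. b \<in> h \<and> h \<noteq> e}"
  then obtain h where "q = {e, h}" "h \<in> edges G" "h \<noteq> e" "b \<in> h" by blast
  then show "q \<in> {q. e \<in> q \<and> {{e, f}, q} \<in> edges (reduced_L2 G)}"
    using reduced_L2_nbrI[OF sg tf e f \<open>b \<noteq> c\<close>] by simp
qed

lemma card_reduced_L2_nbrs:
  assumes sg: "simple_graph G" and cub: "cubic G" and tf: "triangle_free G"
    and p: "p \<in> edges (line_graph G)" "e \<in> p"
  shows "card {q. e \<in> q \<and> {p, q} \<in> edges (reduced_L2 G)} = 2"
proof -
  obtain f where pf: "p = {e, f}" using edges_line_graph_through[OF p] .
  then have "{e, f} \<in> edges (line_graph G)" using p(1) by simp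
  then have "e \<in> edges G" "f \<in> edges G" "e \<noteq> f" "e \<inter> f \<noteq> {}"
    unfolding doubleton_in_edges_line_graph_iff by simp_all
  then obtain a where "a \<in> e" "a \<in> f" by blast
  obtain b where e: "e = {a, b}" "a \<noteq> b" "b \<in> verts G"
    using simple_graph_other_endpoint[OF sg \<open>e \<in> edges G\<close> \<open>a \<in> e\<close>] .
  obtain c where f: "f = {a, c}" "a \<noteq> c" "c \<in> verts G"
    using simple_graph_other_endpoint[OF sg \<open>f \<in> edges G\<close> \<open>a \<in> f\<close>] .
  have "b \<noteq> c" using \<open>e \<noteq> f\<close> e f by auto
  define H where "H = {h \<in> edges G. b \<in> h}"
  have "card H = 3" using cub e(3) unfolding cubic_def degree_def H_def by simp
  moreover have "e \<in> H" using e \<open>e \<in> edges G\<close> H_def by simp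
  ultimately have "card (H - {e}) = 2" by (simp add: card_Diff_singleton)
  moreover have "inj_on (\<lambda>h. {e, h}) (H - {e})" by (auto simp: inj_on_def doubleton_eq_iff)
  moreover have "{h \<in> edges G. b \<in> h \<and> h \<noteq> e} = H - {e}" by (auto simp: H_def)
  ultimately show ?thesis
    using reduced_L2_nbrs_eq[OF sg tf e(1) \<open>e \<in> edges G\<close> f(1) \<open>f \<in> edges G\<close> \<open>b \<noteq> c\<close>] pf
    by (simp add: card_image)
qed

lemma valid_labeling_ex1_open:
  assumes sg: "simple_graph G" and cub: "cubic G" and tf: "triangle_free G"
    and vl: "valid_labeling G lam" and p: "p \<in> edges (line_graph G)" "e \<in> p"
  shows "\<exists>!q. e \<in> q \<and> {p, q} \<in> edges (reduced_L2 G) \<and> lam {p, q} = 1"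
proof -
  define N where "N = {q. e \<in> q \<and> {p, q} \<in> edges (reduced_L2 G)}"
  have "card N = 2" unfolding N_def by (rule card_reduced_L2_nbrs[OF sg cub tf p])
  have "e \<in> edges G" using p edges_line_graph_subset_Pow by blast
  then have "\<forall>v\<in>verts (reduced_clique G e). \<exists>w u. {v, w} \<in> edges (reduced_clique G e)
      \<and> {v, u} \<in> edges (reduced_clique G e) \<and> lam {v, w} = 1 - lam {v, u}"
    using vl unfolding valid_labeling_def by blast
  moreover have "p \<in> verts (reduced_clique G e)"
    using p unfolding reduced_clique_def Let_def verts_def by simp
  ultimately have "\<exists>w u. {p, w} \<in> edges (reduced_clique G e)
      \<and> {p, u} \<in> edges (reduced_clique G e) \<and> lam {p, w} = 1 - lam {p, u}"
    by (rule bspec)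
  then obtain w u where wu: "{p, w} \<in> edges (reduced_clique G e)"
      "{p, u} \<in> edges (reduced_clique G e)" "lam {p, w} = 1 - lam {p, u}"
    by (elim exE conjE)
  then have "w \<in> N" "u \<in> N" unfolding N_def using reduced_clique_edge_iff[OF p] by simp_all
  then have "lam {p, w} \<in> {0, 1}" "lam {p, u} \<in> {0, 1}"
    using vl unfolding valid_labeling_def labeling_def N_def by simp_all
  then have labels: "lam {p, w} = 1 \<and> lam {p, u} = 0 \<or> lam {p, w} = 0 \<and> lam {p, u} = 1"
    using wu(3) by auto
  then have "w \<noteq> u" by auto
  obtain x y where "N = {x, y}" using \<open>card N = 2\<close> unfolding card_2_iff by (elim exE conjE)
  then have "N = {w, u}" using \<open>w \<in> N\<close> \<open>u \<in> N\<close> \<open>w \<noteq> u\<close> by auto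
  then have "\<exists>!q. q \<in> N \<and> lam {p, q} = 1" using labels \<open>w \<noteq> u\<close> by auto
  then show ?thesis unfolding N_def by simp
qed

lemma open_edges_at_vertex:
  assumes sg: "simple_graph G" and cub: "cubic G" and tf: "triangle_free G"
    and vl: "valid_labeling G lam" and v_LG: "v \<in> edges (line_graph G)"
  obtains a b where "a \<noteq> b" "a \<noteq> v" "b \<noteq> v"
    "{x \<in> edges (reduced_L2 G). lam x = 1 \<and> v \<in> x} = {{v, a}, {v, b}}"
proof -
  obtain e f where v: "v = {e, f}" "e \<noteq> f" using v_LG by (rule edges_line_graph_cases)
  then have "e \<in> v" "f \<in> v" by simp_all
  obtain ne where ne: "e \<in> ne \<and> {v, ne} \<in> edges (reduced_L2 G) \<and> lam {v, ne} = 1"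
    and ne_unique: "\<forall>q. e \<in> q \<and> {v, q} \<in> edges (reduced_L2 G) \<and> lam {v, q} = 1 \<longrightarrow> q = ne"
    using valid_labeling_ex1_open[OF sg cub tf vl v_LG \<open>e \<in> v\<close>] by (elim ex1E)
  obtain nf where nf: "f \<in> nf \<and> {v, nf} \<in> edges (reduced_L2 G) \<and> lam {v, nf} = 1"
    and nf_unique: "\<forall>q. f \<in> q \<and> {v, q} \<in> edges (reduced_L2 G) \<and> lam {v, q} = 1 \<longrightarrow> q = nf"
    using valid_labeling_ex1_open[OF sg cub tf vl v_LG \<open>f \<in> v\<close>] by (elim ex1E)
  have "{v, ne} \<in> edges (line_graph (line_graph G))" "{v, nf} \<in> edges (line_graph (line_graph G))"
    using ne nf edges_reduced_L2_subset by blast+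
  then have "ne \<noteq> v" "nf \<noteq> v" "ne \<in> edges (line_graph G)"
    unfolding doubleton_in_edges_line_graph_iff by auto
  have "ne \<noteq> nf"
  proof
    \<comment> \<open>an edge of L(G) containing both e and f is v itself\<close>
    assume "ne = nf"
    obtain s t where "ne = {s, t}" using edges_line_graph_cases[OF \<open>ne \<in> edges (line_graph G)\<close>] .
    then have "ne = v" using ne nf \<open>ne = nf\<close> v by auto
    then show False using \<open>ne \<noteq> v\<close> by simp
  qed
  have "{x \<in> edges (reduced_L2 G). lam x = 1 \<and> v \<in> x} = {{v, ne}, {v, nf}}"
  proof (intro set_eqI iffI)
    fix x assume x: "x \<in> {x \<in> edges (reduced_L2 G). lam x = 1 \<and> v \<in> x}"
    then have "x \<in> edges (line_graph (line_graph G))" "v \<in> x"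
      using edges_reduced_L2_subset[of G] by auto
    then obtain q where q: "x = {v, q}" by (rule edges_line_graph_through)
    then have "{v, q} \<in> edges (reduced_L2 G)" "lam {v, q} = 1"
      "{v, q} \<in> edges (line_graph (line_graph G))"
      using x edges_reduced_L2_subset[of G] by auto
    moreover from this(3) have "e \<in> q \<or> f \<in> q"
      unfolding doubleton_in_edges_line_graph_iff v(1) by auto
    ultimately have "q = ne \<or> q = nf" using ne_unique nf_unique by blast
    then show "x \<in> {{v, ne}, {v, nf}}" using q by auto
  next
    fix x assume "x \<in> {{v, ne}, {v, nf}}"
    then show "x \<in> {x \<in> edges (reduced_L2 G). lam x = 1 \<and> v \<in> x}" using ne nf by auto
  qed
  then show ?thesis using that \<open>ne \<noteq> nf\<close> \<open>ne \<noteq> v\<close> \<open>nf \<noteq> v\<close> by blast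
qed

lemma open_edges_two_regular:
  assumes sg: "simple_graph G" and cub: "cubic G" and tf: "triangle_free G"
    and vl: "valid_labeling G lam"
  shows "two_regular {x \<in> edges (reduced_L2 G). lam x = 1}"
  unfolding two_regular_def
proof (intro conjI ballI)
  fix x assume "x \<in> {x \<in> edges (reduced_L2 G). lam x = 1}"
  then have "x \<in> edges (line_graph (line_graph G))" using edges_reduced_L2_subset by blast
  then obtain u w where "x = {u, w}" "u \<noteq> w" by (rule edges_line_graph_cases)
  then show "\<exists>u v. u \<noteq> v \<and> x = {u, v}" by blast
next
  fix v assume "v \<in> \<Union>{x \<in> edges (reduced_L2 G). lam x = 1}"
  then obtain x where "x \<in> edges (reduced_L2 G)" "v \<in> x" by blast
  then have "v \<in> edges (line_graph G)"
    using edges_reduced_L2_subset edges_line_graph_subset_Pow by blast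
  then obtain a b where "a \<noteq> b" "a \<noteq> v" "b \<noteq> v"
      "{x \<in> edges (reduced_L2 G). lam x = 1 \<and> v \<in> x} = {{v, a}, {v, b}}"
    by (rule open_edges_at_vertex[OF sg cub tf vl])
  moreover from this(4) have "{x \<in> {x \<in> edges (reduced_L2 G). lam x = 1}. v \<in> x} = {{v, a}, {v, b}}"
    by simp
  ultimately show "\<exists>a b. a \<noteq> b \<and> a \<noteq> v \<and> b \<noteq> v \<and>
      {x \<in> {x \<in> edges (reduced_L2 G). lam x = 1}. v \<in> x} = {{v, a}, {v, b}}"
    by blast
qed

lemma finite_edges_reduced_L2:
  assumes "finite_graph G" "simple_graph G"
  shows "finite (edges (reduced_L2 G))"
  using edges_reduced_L2_subset
    finite_edges_line_graph[OF finite_edges_line_graph[OF finite_edges_simple_graph[OF assms]]]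
  by (rule finite_subset)

theorem lemma2p4:
  fixes G :: "'a ugraph" and lam :: "'a set set set \<Rightarrow> nat"
  assumes "finite_graph G" and "simple_graph G" and "connected_graph G"
    and "bridgeless G" and "triangle_free G" and "cubic G"
    and "valid_labeling G lam"
  shows "disjoint_union_of_cycles
           (edge_induced {f \<in> edges (reduced_L2 G). lam f = 1})"
proof (rule two_regular_disjoint_union_of_cycles)
  show "finite {f \<in> edges (reduced_L2 G). lam f = 1}"
    using finite_edges_reduced_L2[OF assms(1,2)] by simp
  show "two_regular {f \<in> edges (reduced_L2 G). lam f = 1}"
    using open_edges_two_regular[OF assms(2,6,5,7)] .
qed

end
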